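(* Every regainingly approximable number is speedable.
   Context: A real $x$ is regainingly approximable if there is a computable non-decreasing sequence of rationals $(x_n)_n$ converging to $x$ with $x - x_n < 2^{-n}$ for infinitely many $n\in\mathbb{N}$. A left-computable real $x$ (i.e. limit of a computable non-decreasing sequence of rationals) is speedable if there exist $\rho\in(0,1)$ and a computable strictly increasing sequence of rationals $(x_n)_n$ converging to $x$ such that $\frac{x-x_{n+1}}{x-x_n}\le\rho$ for infinitely many $n\in\mathbb{N}$. *)

theory Defs
  imports Complex_Main
begin

text \<open>Total computable (recursive) functions on natural numbers: the closure of the
basic functions (zero, successor, projections) under composition, primitive
recursion and minimisation of regular functions (Kleene).  recfn n f means that
f, applied to argument lists of length n, is a total recursive function of arity n.\<close>

inductive recfn :: "nat \<Rightarrow> (nat list \<Rightarrow> nat) \<Rightarrow> bool" where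
  rf_zero: "recfn n (\<lambda>xs. 0)"
| rf_succ: "recfn 1 (\<lambda>xs. Suc (hd xs))"
| rf_proj: "i < n \<Longrightarrow> recfn n (\<lambda>xs. xs ! i)"
| rf_comp: "recfn m f \<Longrightarrow> length gs = m \<Longrightarrow> (\<forall>g\<in>set gs. recfn n g)
            \<Longrightarrow> recfn n (\<lambda>xs. f (map (\<lambda>g. g xs) gs))"
| rf_prim: "recfn n f \<Longrightarrow> recfn (Suc (Suc n)) g
            \<Longrightarrow> recfn (Suc n) (\<lambda>xs. rec_nat (f (tl xs)) (\<lambda>y r. g (y # r # tl xs)) (hd xs))"
| rf_min: "recfn (Suc n) g \<Longrightarrow> (\<forall>xs. length xs = n \<longrightarrow> (\<exists>y. g (y # xs) = 0))
            \<Longrightarrow> recfn n (\<lambda>xs. LEAST y. g (y # xs) = 0)"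

definition computable_nat_fun :: "(nat \<Rightarrow> nat) \<Rightarrow> bool" where
  "computable_nat_fun f \<longleftrightarrow> (\<exists>F. recfn 1 F \<and> (\<forall>k. f k = F [k]))"

definition computable_rat_seq :: "(nat \<Rightarrow> rat) \<Rightarrow> bool" where
  "computable_rat_seq q \<longleftrightarrow> (\<exists>a b c. computable_nat_fun a \<and> computable_nat_fun b \<and>
      computable_nat_fun c \<and> (\<forall>n. q n = (of_nat (a n) - of_nat (b n)) / of_nat (c n + 1)))"

definition left_computable :: "real \<Rightarrow> bool" where
  "left_computable x \<longleftrightarrow> (\<exists>q. computable_rat_seq q \<and> mono q \<and>
      (\<lambda>n. real_of_rat (q n)) \<longlonglongrightarrow> x)"

definition regainingly_approximable :: "real \<Rightarrow> bool" where
  "regainingly_approximable x \<longleftrightarrow> (\<exists>q. computable_rat_seq q \<and> mono q \<and>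
      (\<lambda>n. real_of_rat (q n)) \<longlonglongrightarrow> x \<and>
      infinite {n. x - real_of_rat (q n) < 2 powi (- int n)})"

definition speedable :: "real \<Rightarrow> bool" where
  "speedable x \<longleftrightarrow> left_computable x \<and> (\<exists>\<rho> q. 0 < \<rho> \<and> \<rho> < 1 \<and>
      computable_rat_seq q \<and> strict_mono q \<and> (\<lambda>n. real_of_rat (q n)) \<longlonglongrightarrow> x \<and>
      infinite {n. (x - real_of_rat (q (Suc n))) / (x - real_of_rat (q n)) \<le> \<rho>})"

end

theory Submission
  imports Defs "HOL-Library.Infinite_Set"
begin

text \<open>Let \<open>q\<close> be a nondecreasing approximation of \<open>x\<close> with \<open>x - q m < 2^-m\<close> for
  infinitely many \<open>m\<close>, and put \<open>p n = q (2n) - 2^-n\<close>; this is strictly increasing and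
  converges to \<open>x\<close>. Always \<open>x - p n \<ge> 2^-n\<close>, while for \<open>n = m div 2\<close> with \<open>m\<close> as above
  \<open>x - p (n+1) \<le> (x - q m) + 2^-(n+1) \<le> 2^-2n + 2^-(n+1) \<le> (3/4) 2^-n\<close> once \<open>n \<ge> 2\<close>.
  So the ratio \<open>(x - p (n+1)) / (x - p n)\<close> is at most \<open>3/4\<close> infinitely often.\<close>

lemma recfn_const_Suc0: "recfn n (\<lambda>xs. Suc 0)"
proof -
  have "recfn n (\<lambda>xs. (\<lambda>xs. Suc (hd xs)) (map (\<lambda>g. g xs) [\<lambda>xs. 0]))"
    by (rule rf_comp[OF rf_succ]) (auto intro: rf_zero)
  then show ?thesis by simp
qed

lemma recfn2_add: "\<exists>A. recfn 2 A \<and> (\<forall>a b. A [a, b] = a + b)"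
proof -
  have "recfn (Suc (Suc 1)) (\<lambda>xs. (\<lambda>xs. Suc (hd xs)) (map (\<lambda>g. g xs) [\<lambda>xs. xs ! 1]))"
    by (rule rf_comp[OF rf_succ]) (auto intro: rf_proj)
  from rf_prim[OF rf_proj this]
  have "recfn 2 (\<lambda>xs. rec_nat (tl xs ! 0) (\<lambda>y r. Suc r) (hd xs))"
    by (simp add: numeral_eq_Suc)
  moreover have "rec_nat b (\<lambda>y r. Suc r) a = a + b" for a b :: nat
    by (induction a) auto
  ultimately show ?thesis by auto
qed

lemma recfn2_mult: "\<exists>M. recfn 2 M \<and> (\<forall>a b. M [a, b] = a * b)"
proof -
  obtain A where A: "recfn 2 A" "\<And>a b. A [a, b] = a + b" using recfn2_add by blast
  have "recfn (Suc (Suc 1)) (\<lambda>xs. A (map (\<lambda>g. g xs) [\<lambda>xs. xs ! 1, \<lambda>xs. xs ! 2]))"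
    by (rule rf_comp[OF A(1)]) (auto intro: rf_proj)
  from rf_prim[OF rf_zero this]
  have "recfn 2 (\<lambda>xs. rec_nat 0 (\<lambda>y r. A [r, tl xs ! 0]) (hd xs))"
    by (simp add: numeral_eq_Suc)
  moreover have "rec_nat 0 (\<lambda>y r. A [r, b]) a = a * b" for a b :: nat
    by (induction a) (auto simp: A(2))
  ultimately show ?thesis by auto
qed

lemma computable_nat_fun_binop:
  assumes "recfn 2 H" "\<And>a b. H [a, b] = h a b"
    and "computable_nat_fun f" "computable_nat_fun g"
  shows "computable_nat_fun (\<lambda>k. h (f k) (g k))"
proof -
  obtain F G where F: "recfn 1 F" "\<And>k. f k = F [k]" and G: "recfn 1 G" "\<And>k. g k = G [k]"
    using assms(3,4) unfolding computable_nat_fun_def by blast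
  have "recfn 1 (\<lambda>xs. H (map (\<lambda>g. g xs) [F, G]))"
    using F(1) G(1) by (intro rf_comp[OF assms(1)]) auto
  then show ?thesis unfolding computable_nat_fun_def by (auto simp: assms(2) F G)
qed

lemma computable_nat_fun_add:
  "computable_nat_fun f \<Longrightarrow> computable_nat_fun g \<Longrightarrow> computable_nat_fun (\<lambda>k. f k + g k)"
  using recfn2_add computable_nat_fun_binop by blast

lemma computable_nat_fun_mult:
  "computable_nat_fun f \<Longrightarrow> computable_nat_fun g \<Longrightarrow> computable_nat_fun (\<lambda>k. f k * g k)"
  using recfn2_mult computable_nat_fun_binop by blast

lemma computable_nat_fun_comp:
  assumes "computable_nat_fun f" "computable_nat_fun g"
  shows "computable_nat_fun (\<lambda>k. f (g k))"
proof -
  obtain F G where F: "recfn 1 F" "\<And>k. f k = F [k]" and G: "recfn 1 G" "\<And>k. g k = G [k]"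
    using assms unfolding computable_nat_fun_def by blast
  have "recfn 1 (\<lambda>xs. F (map (\<lambda>g. g xs) [G]))"
    using G(1) by (intro rf_comp[OF F(1)]) auto
  then show ?thesis unfolding computable_nat_fun_def by (auto simp: F G)
qed

lemma computable_nat_fun_id: "computable_nat_fun (\<lambda>k. k)"
  unfolding computable_nat_fun_def by (intro exI[of _ "\<lambda>xs. xs ! 0"]) (auto intro: rf_proj)

lemma computable_nat_fun_const_0: "computable_nat_fun (\<lambda>k. 0)"
  unfolding computable_nat_fun_def using rf_zero by blast

lemma computable_nat_fun_const_1: "computable_nat_fun (\<lambda>k. 1)"
  unfolding computable_nat_fun_def using recfn_const_Suc0 by auto

lemma computable_nat_fun_pred: "computable_nat_fun (\<lambda>k. k - 1)"
proof -
  have "recfn (Suc (Suc 0)) (\<lambda>xs. xs ! 0)" by (rule rf_proj) simp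
  from rf_prim[OF rf_zero this] have "recfn 1 (\<lambda>xs. rec_nat 0 (\<lambda>y r. y) (hd xs))" by simp
  moreover have "rec_nat 0 (\<lambda>y r. y) k = k - 1" for k :: nat by (cases k) auto
  ultimately show ?thesis unfolding computable_nat_fun_def by auto
qed

lemma computable_nat_fun_power2: "computable_nat_fun (\<lambda>k. 2 ^ k)"
proof -
  obtain A where A: "recfn 2 A" "\<And>a b. A [a, b] = a + b" using recfn2_add by blast
  have "recfn (Suc (Suc 0)) (\<lambda>xs. A (map (\<lambda>g. g xs) [\<lambda>xs. xs ! 1, \<lambda>xs. xs ! 1]))"
    by (rule rf_comp[OF A(1)]) (auto intro: rf_proj)
  from rf_prim[OF recfn_const_Suc0 this]
  have "recfn 1 (\<lambda>xs. rec_nat (Suc 0) (\<lambda>y r. A [r, r]) (hd xs))" by simp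
  moreover have "rec_nat (Suc 0) (\<lambda>y r. A [r, r]) k = 2 ^ k" for k :: nat
    by (induction k) (auto simp: A(2))
  ultimately show ?thesis unfolding computable_nat_fun_def by auto
qed

lemma computable_rat_seq_comp:
  assumes "computable_rat_seq q" "computable_nat_fun f"
  shows "computable_rat_seq (\<lambda>n. q (f n))"
  using assms computable_nat_fun_comp unfolding computable_rat_seq_def by metis

lemma computable_rat_seq_inverse_power2: "computable_rat_seq (\<lambda>n. 1 / 2 ^ n)"
proof -
  have "(1 / 2 ^ n :: rat) = (of_nat 1 - of_nat 0) / of_nat (2 ^ n - 1 + 1)" for n
    by simp
  then show ?thesis unfolding computable_rat_seq_def
    using computable_nat_fun_const_0 computable_nat_fun_const_1
      computable_nat_fun_comp[OF computable_nat_fun_pred computable_nat_fun_power2]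
    by blast
qed

lemma diff_frac_succ_denominators:
  fixes c c' :: "'a::linordered_field"
  assumes "c \<ge> 0" "c' \<ge> 0"
  shows "(a - b) / (c + 1) - (a' - b') / (c' + 1) =
    ((a * c' + a + b' * c + b') - (b * c' + b + a' * c + a')) / (c * c' + c + c' + 1)"
proof -
  have "c + 1 \<noteq> 0" "c' + 1 \<noteq> 0" "c * c' + c + c' + 1 = (c + 1) * (c' + 1)"
    using assms by (auto simp: algebra_simps)
  then show ?thesis by (simp add: diff_frac_eq) (simp add: algebra_simps)
qed

lemma computable_rat_seq_diff:
  assumes "computable_rat_seq q" "computable_rat_seq r"
  shows "computable_rat_seq (\<lambda>n. q n - r n)"
proof -
  obtain a b c where abc: "computable_nat_fun a" "computable_nat_fun b" "computable_nat_fun c"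
    "\<And>n. q n = (of_nat (a n) - of_nat (b n)) / of_nat (c n + 1)"
    using assms(1) unfolding computable_rat_seq_def by blast
  obtain a' b' c' where abc': "computable_nat_fun a'" "computable_nat_fun b'" "computable_nat_fun c'"
    "\<And>n. r n = (of_nat (a' n) - of_nat (b' n)) / of_nat (c' n + 1)"
    using assms(2) unfolding computable_rat_seq_def by blast
  note closure = computable_nat_fun_add computable_nat_fun_mult
  have A: "computable_nat_fun (\<lambda>n. a n * c' n + a n + b' n * c n + b' n)"
    and B: "computable_nat_fun (\<lambda>n. b n * c' n + b n + a' n * c n + a' n)"
    and C: "computable_nat_fun (\<lambda>n. c n * c' n + c n + c' n)"
    by (intro closure abc abc')+
  have "q n - r n = (of_nat (a n * c' n + a n + b' n * c n + b' n)
      - of_nat (b n * c' n + b n + a' n * c n + a' n)) / of_nat (c n * c' n + c n + c' n + 1)" for n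
    unfolding abc(4) abc'(4) of_nat_add of_nat_mult of_nat_1
    by (rule diff_frac_succ_denominators) simp_all
  then show ?thesis unfolding computable_rat_seq_def using A B C by blast
qed

definition speedup_seq :: "(nat \<Rightarrow> 'a::field) \<Rightarrow> nat \<Rightarrow> 'a" where
  "speedup_seq q n = q (2 * n) - (1 / 2) ^ n"

lemma computable_rat_seq_speedup_seq:
  assumes "computable_rat_seq q"
  shows "computable_rat_seq (speedup_seq q)"
proof -
  have "computable_nat_fun (\<lambda>n. 2 * n)"
    using computable_nat_fun_add[OF computable_nat_fun_id computable_nat_fun_id] by (simp add: mult_2)
  from computable_rat_seq_comp[OF assms this]
  have "computable_rat_seq (\<lambda>n. q (2 * n) - 1 / 2 ^ n)"
    by (rule computable_rat_seq_diff[OF _ computable_rat_seq_inverse_power2])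
  then show ?thesis unfolding speedup_seq_def[abs_def] power_one_over .
qed

lemma of_rat_speedup_seq: "real_of_rat (speedup_seq q n) = speedup_seq (\<lambda>n. real_of_rat (q n)) n"
  by (simp add: speedup_seq_def of_rat_diff of_rat_power of_rat_divide)

lemma strict_mono_speedup_seq:
  fixes q :: "nat \<Rightarrow> 'a::linordered_field"
  assumes "mono q"
  shows "strict_mono (speedup_seq q)"
proof (rule strict_mono_Suc_iff[THEN iffD2], intro allI)
  fix n
  have "q (2 * n) \<le> q (2 * Suc n)" using assms unfolding mono_def by simp
  moreover have "(1 / 2) ^ Suc n < ((1 / 2) ^ n :: 'a)" by (simp add: field_simps)
  ultimately show "speedup_seq q n < speedup_seq q (Suc n)" unfolding speedup_seq_def by linarith
qed

lemma speedup_seq_tendsto: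
  fixes q :: "nat \<Rightarrow> real"
  assumes "q \<longlonglongrightarrow> x"
  shows "speedup_seq q \<longlonglongrightarrow> x"
proof -
  have "(\<lambda>n. q (2 * n)) \<longlonglongrightarrow> x"
    using LIMSEQ_subseq_LIMSEQ[OF assms, of "\<lambda>n. 2 * n"] by (simp add: strict_mono_def o_def)
  from tendsto_diff[OF this LIMSEQ_power_zero[of "1 / 2 :: real"]] show ?thesis
    unfolding speedup_seq_def[abs_def] by simp
qed

lemma speedup_seq_ratio_le:
  fixes q :: "nat \<Rightarrow> real"
  assumes "incseq q" "\<And>k. q k \<le> x" "m \<ge> 4" "x - q m < 2 powi - int m"
  defines "n \<equiv> m div 2"
  shows "(x - speedup_seq q (Suc n)) / (x - speedup_seq q n) \<le> 3 / 4"
proof -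
  define e :: real where "e = (1 / 2) ^ n"
  have "e > 0" unfolding e_def by simp
  have "e \<le> (1 / 2) ^ 2" unfolding e_def
    by (rule power_decreasing) (use assms(3) n_def in auto)
  have "(2::real) powi - int m = (1 / 2) ^ m"
    by (simp add: power_int_minus power_one_over inverse_eq_divide)
  also have "\<dots> \<le> (1 / 2) ^ (2 * n)"
    by (rule power_decreasing) (auto simp: n_def)
  also have "\<dots> = e * e" unfolding e_def by (simp add: power_mult power2_eq_square mult.commute)
  also have "\<dots> \<le> e / 4" using \<open>e > 0\<close> \<open>e \<le> (1 / 2) ^ 2\<close> by (simp add: power2_eq_square)
  finally have regain: "x - q m < e / 4" using assms(4) by simp
  have "q m \<le> q (2 * Suc n)" using assms(1) unfolding incseq_def n_def by simp
  then have "x - speedup_seq q (Suc n) \<le> 3 / 4 * e"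
    using regain unfolding speedup_seq_def e_def by simp
  moreover have "x - speedup_seq q n \<ge> e"
    using assms(2)[of "2 * n"] unfolding speedup_seq_def e_def by simp
  ultimately show ?thesis using \<open>e > 0\<close> by (simp add: divide_le_eq)
qed

lemma speedup_seq_ratio_le_infinitely_often:
  fixes q :: "nat \<Rightarrow> real"
  assumes "incseq q" "q \<longlonglongrightarrow> x" "infinite {m. x - q m < 2 powi - int m}"
  shows "infinite {n. (x - speedup_seq q (Suc n)) / (x - speedup_seq q n) \<le> 3 / 4}"
  unfolding infinite_nat_iff_unbounded_le
proof
  fix N
  obtain m where "m \<ge> 2 * N + 4" "x - q m < 2 powi - int m"
    using assms(3) unfolding infinite_nat_iff_unbounded_le by blast
  with speedup_seq_ratio_le[OF assms(1) incseq_le[OF assms(1,2)]]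
  show "\<exists>n\<ge>N. n \<in> {n. (x - speedup_seq q (Suc n)) / (x - speedup_seq q n) \<le> 3 / 4}"
    by (intro exI[of _ "m div 2"]) auto
qed

theorem proposition5p2:
  fixes x :: real
  assumes "regainingly_approximable x"
  shows "speedable x"
proof -
  obtain q where q: "computable_rat_seq q" "mono q" "(\<lambda>n. real_of_rat (q n)) \<longlonglongrightarrow> x"
    "infinite {n. x - real_of_rat (q n) < 2 powi (- int n)}"
    using assms unfolding regainingly_approximable_def by blast
  have "incseq (\<lambda>n. real_of_rat (q n))"
    using q(2) unfolding mono_def incseq_def by (simp add: of_rat_less_eq)
  then have "infinite {n. (x - real_of_rat (speedup_seq q (Suc n)))
      / (x - real_of_rat (speedup_seq q n)) \<le> 3 / 4}"
    unfolding of_rat_speedup_seq using speedup_seq_ratio_le_infinitely_often q(3,4) by blast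
  moreover have "(\<lambda>n. real_of_rat (speedup_seq q n)) \<longlonglongrightarrow> x"
    unfolding of_rat_speedup_seq by (rule speedup_seq_tendsto[OF q(3)])
  moreover have "left_computable x" unfolding left_computable_def using q by blast
  ultimately show ?thesis unfolding speedable_def
    using computable_rat_seq_speedup_seq[OF q(1)] strict_mono_speedup_seq[OF q(2)]
    by (intro conjI exI[of _ "3 / 4 :: real"] exI[of _ "speedup_seq q"]) auto
qed

end
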